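(* For all integers $m\ge1$, $K(2^m,4)\neq K(2^m,1,1)$. Moreover, if $m<14$ then $K(2^m,4)<K(2^m,1,1)$, and if $m\ge 14$ then $K(2^m,4)>K(2^m,1,1)$.
   Context: $2^m$ denotes the list $2,2,\ldots,2$ ($m$ entries). For a list $(c_1,\ldots,c_k)$ of positive integers with even sum and $n=\frac12(c_1+\cdots+c_k+2)$, $K(c_1,\ldots,c_k)$ is the number of Young tableaux of shape $(n-1,n-1)$ and content $(c_1,\ldots,c_k)$: two-rowed arrays of integers, each row of length $n-1$, weakly increasing along rows, strictly increasing down columns, with exactly $c_i$ occurrences of $i$ for each $i$ (this number is $0$ if no such tableau exists). *)

theory Defs
  imports Main
begin

text \<open>A Young tableau of shape (L,L) (two rows of length L) with entries in {1..k},
  represented as a function T row col, with rows 0,1 and columns 0..L-1;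
  T is required to be 0 outside this domain so the set of tableaux is finite.
  Content cs = [c_1,...,c_k]: value i+1 occurs exactly cs!i times.\<close>

definition two_row_tableaux :: "nat list \<Rightarrow> (nat \<Rightarrow> nat \<Rightarrow> nat) set" where
  "two_row_tableaux cs =
    (let k = length cs; L = (sum_list cs + 2) div 2 - 1 in
     {T. (\<forall>i j. \<not> (i < 2 \<and> j < L) \<longrightarrow> T i j = 0)
       \<and> (\<forall>i<2. \<forall>j<L. 1 \<le> T i j \<and> T i j \<le> k)
       \<and> (\<forall>i<2. \<forall>j. Suc j < L \<longrightarrow> T i j \<le> T i (Suc j))
       \<and> (\<forall>j<L. T 0 j < T 1 j)
       \<and> (\<forall>v<k. card {(i, j). i < 2 \<and> j < L \<and> T i j = Suc v} = cs ! v)})"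

definition Kostka2 :: "nat list \<Rightarrow> nat" where
  "Kostka2 cs = card (two_row_tableaux cs)"

end

theory Submission
  imports Defs
begin

text \<open>
  Tableaux are built by placing the largest entry last: its occurrences form a horizontal
  strip at the right ends of the two rows, so tableaux of shape \<open>(p, q)\<close> obey a recursion
  in the content. For content \<open>2\<^sup>m\<close> this is the recursion of the trinomial coefficients
  \<open>t\<^sub>m(k) = [x\<^sup>k] (x\<^sup>-\<^sup>1 + 1 + x)\<^sup>m\<close>, and the count is the ballot difference
  \<open>t\<^sub>m(h) - t\<^sub>m(h + 1)\<close> with \<open>h = (p - q) / 2\<close>. Hence \<open>K(2\<^sup>m,4) = t\<^sub>m(2) - t\<^sub>m(3)\<close> and
  \<open>K(2\<^sup>m,1,1) = t\<^sub>m(0) - t\<^sub>m(2)\<close>. The P-recurrence of the trinomial coefficients turns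
  \<open>(m + 2)(m + 3)\<close> times the difference into \<open>(m\<^sup>2 + 3m - 6) t\<^sub>m(0) - (m\<^sup>2 + 3m + 6) t\<^sub>m(1)\<close>.
  Its sign is computed for \<open>m \<le> 33\<close>; beyond that it is positive because
  \<open>1 - 4/(5m) \<le> t\<^sub>m(1)/t\<^sub>m(0) \<le> 1 - 7/(10m)\<close>, bounds which propagate from \<open>m\<close> to \<open>m + 1\<close>.
\<close>

section \<open>Trinomial coefficients\<close>

fun trinomial :: "nat \<Rightarrow> int \<Rightarrow> int" where
  "trinomial 0 k = (if k = 0 then 1 else 0)"
| "trinomial (Suc m) k = trinomial m (k - 1) + trinomial m k + trinomial m (k + 1)"

lemma trinomial_uminus: "trinomial m (- k) = trinomial m k"
proof (induction m arbitrary: k)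
  case (Suc m)
  have "trinomial m (- k - 1) = trinomial m (k + 1)" "trinomial m (- k + 1) = trinomial m (k - 1)"
    using Suc[of "k + 1"] Suc[of "k - 1"] by simp_all
  with Suc[of k] show ?case by simp
qed simp

lemma trinomial_eq_0: "int m < \<bar>k\<bar> \<Longrightarrow> trinomial m k = 0"
  by (induction m arbitrary: k) auto

lemma trinomial_nonneg: "0 \<le> trinomial m k"
  by (induction m arbitrary: k) auto

lemma trinomial_Suc_0: "trinomial (Suc m) 0 = trinomial m 0 + 2 * trinomial m 1"
  using trinomial_uminus[of m 1] by simp

lemma trinomial_0_pos: "1 \<le> trinomial m 0"
proof (induction m)
  case (Suc m)
  then show ?case using trinomial_Suc_0[of m] trinomial_nonneg[of m 1] by simp
qed simp

text \<open>The defect of the recurrence at \<open>m + 1\<close> is the sum of its defects at \<open>m\<close> in positions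
  \<open>k - 1\<close>, \<open>k\<close>, \<open>k + 1\<close>.\<close>

lemma trinomial_recurrence:
  "(int m + k + 1) * trinomial m (k + 1) = (int m - k + 1) * trinomial m (k - 1) - k * trinomial m k"
proof (induction m arbitrary: k)
  case (Suc m)
  let ?D = "\<lambda>k. (int m + k + 1) * trinomial m (k + 1) - (int m - k + 1) * trinomial m (k - 1)
    + k * trinomial m k"
  have "(int (Suc m) + k + 1) * trinomial (Suc m) (k + 1)
      - (int (Suc m) - k + 1) * trinomial (Suc m) (k - 1) + k * trinomial (Suc m) k
      = ?D (k - 1) + ?D k + ?D (k + 1)"
    by (simp add: algebra_simps)
  moreover have defect: "?D j = 0" for j
    using Suc[of j] by linarith
  ultimately show ?case unfolding defect by simp
qed simp

lemma trinomial_Suc_1: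
  "(int m + 2) * trinomial (Suc m) 1 = (2 * int m + 2) * trinomial m 0 + (int m + 1) * trinomial m 1"
  using trinomial_recurrence[of m 1] by (simp add: algebra_simps)

text \<open>A linear-time evaluation of \<open>(t\<^sub>m(0), t\<^sub>m(1))\<close>, for computing with \<open>code_simp\<close>;
  the defining recursion of \<^const>\<open>trinomial\<close> takes exponential time.\<close>

fun trinomial_01 :: "nat \<Rightarrow> int \<times> int" where
  "trinomial_01 0 = (1, 0)"
| "trinomial_01 (Suc m) = (case trinomial_01 m of (x, y) \<Rightarrow>
     (x + 2 * y, ((2 * int m + 2) * x + (int m + 1) * y) div (int m + 2)))"

lemma trinomial_01_eq: "trinomial_01 m = (trinomial m 0, trinomial m 1)"
proof (induction m)
  case (Suc m)
  have "trinomial (Suc m) 1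
      = ((2 * int m + 2) * trinomial m 0 + (int m + 1) * trinomial m 1) div (int m + 2)"
    by (simp flip: trinomial_Suc_1)
  with Suc show ?case by (simp add: trinomial_uminus[of m 1])
qed simp

definition gap_form :: "nat \<Rightarrow> int \<times> int \<Rightarrow> int" where
  "gap_form m = (\<lambda>(x, y). (int m * int m + 3 * int m - 6) * x - (int m * int m + 3 * int m + 6) * y)"

lemma trinomial_gap_identity:
  "(int m + 2) * (int m + 3) * (2 * trinomial m 2 - trinomial m 3 - trinomial m 0)
    = gap_form m (trinomial m 0, trinomial m 1)"
proof -
  let ?M = "int m" and ?t = "trinomial m"
  have t2: "(?M + 2) * ?t 2 = ?M * ?t 0 - ?t 1"
    using trinomial_recurrence[of m 1] by (simp add: add.commute)
  have t3: "(?M + 3) * ?t 3 = (?M - 1) * ?t 1 - 2 * ?t 2"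
    using trinomial_recurrence[of m 2] by (simp add: add.commute)
  have "(?M + 2) * (?M + 3) * (2 * ?t 2 - ?t 3 - ?t 0) = gap_form m (?t 0, ?t 1)
      + 2 * (?M + 4) * ((?M + 2) * ?t 2 - (?M * ?t 0 - ?t 1))
      - (?M + 2) * ((?M + 3) * ?t 3 - ((?M - 1) * ?t 1 - 2 * ?t 2))"
    by (simp add: gap_form_def algebra_simps)
  with t2 t3 show ?thesis by simp
qed

section \<open>The sign of the gap form\<close>

lemma gap_form_pos:
  assumes m: "33 \<le> m" and x: "1 \<le> x" and upper: "10 * int m * y \<le> (10 * int m - 7) * x"
  shows "0 < gap_form m (x, y)"
proof -
  let ?M = "int m"
  have MM: "0 \<le> ?M * ?M" by simp
  have "0 \<le> (?M * ?M + 3 * ?M + 6) * ((10 * ?M - 7) * x - 10 * ?M * y)"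
    by (rule mult_nonneg_nonneg) (use MM upper in linarith)+
  moreover have "0 < (7 * ?M * ?M - 99 * ?M + 42) * x"
  proof -
    have "33 * 1 \<le> ?M * (7 * ?M - 99)" using m by (intro mult_mono) auto
    then have "0 < 7 * ?M * ?M - 99 * ?M + 42" by (simp add: algebra_simps)
    then show ?thesis using x by simp
  qed
  moreover have "10 * ?M * gap_form m (x, y)
      = (?M * ?M + 3 * ?M + 6) * ((10 * ?M - 7) * x - 10 * ?M * y) + (7 * ?M * ?M - 99 * ?M + 42) * x"
    by (simp add: gap_form_def algebra_simps)
  ultimately have "0 < 10 * ?M * gap_form m (x, y)" by linarith
  then show ?thesis using m by (simp add: zero_less_mult_iff)
qed

text \<open>The ratio \<open>t\<^sub>m\<^sub>+\<^sub>1(1)/t\<^sub>m\<^sub>+\<^sub>1(0)\<close> is a decreasing function of \<open>t\<^sub>m(1)/t\<^sub>m(0)\<close>, so each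
  bound at \<open>m + 1\<close> comes from the opposite bound at \<open>m\<close>.\<close>

lemma ratio_upper_step:
  fixes M x y X Y :: int
  assumes M: "33 \<le> M" and x: "0 \<le> x" and lower: "(5 * M - 4) * x \<le> 5 * M * y"
    and X: "X = x + 2 * y" and Y: "(M + 2) * Y = (2 * M + 2) * x + (M + 1) * y"
  shows "10 * (M + 1) * Y \<le> (10 * (M + 1) - 7) * X"
proof -
  have MM: "0 \<le> M * M" by simp
  have "0 \<le> (10 * M * M + 26 * M + 2) * (5 * M * y - (5 * M - 4) * x)"
    by (rule mult_nonneg_nonneg) (use M MM lower in linarith)+
  moreover have "0 \<le> (5 * M * M - 164 * M - 8) * x"
  proof -
    have "33 * 1 \<le> M * (5 * M - 164)" using M by (intro mult_mono) auto
    then have "0 \<le> 5 * M * M - 164 * M - 8" by (simp add: algebra_simps)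
    then show ?thesis using x by simp
  qed
  moreover have "5 * M * (M + 2) * ((10 * (M + 1) - 7) * X - 10 * (M + 1) * Y)
      = 5 * M * ((10 * M + 3) * (M + 2) * X - 10 * (M + 1) * ((M + 2) * Y))"
    by (simp add: algebra_simps)
  moreover have "\<dots> = (10 * M * M + 26 * M + 2) * (5 * M * y - (5 * M - 4) * x)
      + (5 * M * M - 164 * M - 8) * x"
    unfolding X Y by (simp add: algebra_simps)
  ultimately have "0 \<le> 5 * M * (M + 2) * ((10 * (M + 1) - 7) * X - 10 * (M + 1) * Y)"
    by linarith
  moreover have "0 < 5 * M * (M + 2)" using M by simp
  ultimately show ?thesis by (simp add: zero_le_mult_iff)
qed

lemma ratio_lower_step:
  fixes M x y X Y :: int
  assumes M: "33 \<le> M" and x: "0 \<le> x" and upper: "10 * M * y \<le> (10 * M - 7) * x"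
    and X: "X = x + 2 * y" and Y: "(M + 2) * Y = (2 * M + 2) * x + (M + 1) * y"
  shows "(5 * (M + 1) - 4) * X \<le> 5 * (M + 1) * Y"
proof -
  have MM: "0 \<le> M * M" by simp
  have "0 \<le> (5 * M * M + 12 * M - 1) * ((10 * M - 7) * x - 10 * M * y)"
    by (rule mult_nonneg_nonneg) (use M MM upper in linarith)+
  moreover have "0 \<le> (5 * M * M + 174 * M - 7) * x"
    by (rule mult_nonneg_nonneg) (use M MM x in linarith)+
  moreover have "10 * M * (M + 2) * (5 * (M + 1) * Y - (5 * (M + 1) - 4) * X)
      = 10 * M * (5 * (M + 1) * ((M + 2) * Y) - (5 * M + 1) * (M + 2) * X)"
    by (simp add: algebra_simps)
  moreover have "\<dots> = (5 * M * M + 12 * M - 1) * ((10 * M - 7) * x - 10 * M * y)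
      + (5 * M * M + 174 * M - 7) * x"
    unfolding X Y by (simp add: algebra_simps)
  ultimately have "0 \<le> 10 * M * (M + 2) * (5 * (M + 1) * Y - (5 * (M + 1) - 4) * X)"
    by linarith
  moreover have "0 < 10 * M * (M + 2)" using M by simp
  ultimately show ?thesis by (simp add: zero_le_mult_iff)
qed

lemma trinomial_ratio_bounds:
  assumes "33 \<le> m"
  shows "(5 * int m - 4) * trinomial m 0 \<le> 5 * int m * trinomial m 1
    \<and> 10 * int m * trinomial m 1 \<le> (10 * int m - 7) * trinomial m 0"
  using assms
proof (induction m rule: dec_induct)
  case base
  have "trinomial_01 33 = (470139239360787, 459807788441331)" by code_simp
  then show ?case by (simp add: trinomial_01_eq)
next
  case (step m)
  have M: "33 \<le> int m" using step.hyps by simp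
  show ?case
    using ratio_upper_step[OF M trinomial_nonneg _ trinomial_Suc_0 trinomial_Suc_1]
      ratio_lower_step[OF M trinomial_nonneg _ trinomial_Suc_0 trinomial_Suc_1] step.IH
    by (simp del: trinomial.simps add: algebra_simps)
qed

lemma gap_form_neg_below_14:
  assumes "1 \<le> m" "m < 14"
  shows "gap_form m (trinomial m 0, trinomial m 1) < 0"
proof -
  have "list_all (\<lambda>m. gap_form m (trinomial_01 m) < 0) [1..<14]" by code_simp
  with assms show ?thesis unfolding list_all_iff set_upt by (auto simp: trinomial_01_eq)
qed

lemma gap_form_pos_from_14:
  assumes "14 \<le> m"
  shows "0 < gap_form m (trinomial m 0, trinomial m 1)"
proof (cases "m < 34")
  case True
  have "list_all (\<lambda>m. 0 < gap_form m (trinomial_01 m)) [14..<34]" by code_simp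
  with assms True show ?thesis unfolding list_all_iff set_upt by (auto simp: trinomial_01_eq)
next
  case False
  then have "33 \<le> m" by simp
  then show ?thesis using gap_form_pos[OF _ trinomial_0_pos] trinomial_ratio_bounds by blast
qed

section \<open>Tableaux of two-row shape\<close>

text \<open>Unequal row lengths are needed because deleting the largest entry of a rectangular
  tableau leaves a tableau of non-rectangular shape.\<close>

definition shape_tableaux :: "nat list \<Rightarrow> nat \<Rightarrow> nat \<Rightarrow> (nat \<Rightarrow> nat \<Rightarrow> nat) set" where
  "shape_tableaux cs p q = {T. q \<le> p
     \<and> (\<forall>j\<ge>p. T 0 j = 0) \<and> (\<forall>j\<ge>q. T 1 j = 0) \<and> (\<forall>i\<ge>2. \<forall>j. T i j = 0)
     \<and> (\<forall>j<p. 1 \<le> T 0 j \<and> T 0 j \<le> length cs) \<and> (\<forall>j<q. 1 \<le> T 1 j \<and> T 1 j \<le> length cs)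
     \<and> (\<forall>j. Suc j < p \<longrightarrow> T 0 j \<le> T 0 (Suc j)) \<and> (\<forall>j. Suc j < q \<longrightarrow> T 1 j \<le> T 1 (Suc j))
     \<and> (\<forall>j<q. T 0 j < T 1 j) \<and> (\<forall>v<length cs. card {(i, j). T i j = Suc v} = cs ! v)}"

lemma shape_tableauxD:
  assumes "T \<in> shape_tableaux cs p q"
  shows "q \<le> p" "\<And>j. p \<le> j \<Longrightarrow> T 0 j = 0" "\<And>j. q \<le> j \<Longrightarrow> T 1 j = 0"
    "\<And>i j. 2 \<le> i \<Longrightarrow> T i j = 0"
    "\<And>j. j < p \<Longrightarrow> 1 \<le> T 0 j" "\<And>j. j < p \<Longrightarrow> T 0 j \<le> length cs"
    "\<And>j. j < q \<Longrightarrow> 1 \<le> T 1 j" "\<And>j. j < q \<Longrightarrow> T 1 j \<le> length cs"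
    "\<forall>j. Suc j < p \<longrightarrow> T 0 j \<le> T 0 (Suc j)" "\<forall>j. Suc j < q \<longrightarrow> T 1 j \<le> T 1 (Suc j)"
    "\<And>j. j < q \<Longrightarrow> T 0 j < T 1 j"
    "\<And>v. v < length cs \<Longrightarrow> card {(i, j). T i j = Suc v} = cs ! v"
  using assms unfolding shape_tableaux_def by auto

lemma shape_tableauxI:
  assumes "q \<le> p" "\<And>j. p \<le> j \<Longrightarrow> T 0 j = 0" "\<And>j. q \<le> j \<Longrightarrow> T 1 j = 0"
    "\<And>i j. 2 \<le> i \<Longrightarrow> T i j = 0"
    "\<And>j. j < p \<Longrightarrow> 1 \<le> T 0 j" "\<And>j. j < p \<Longrightarrow> T 0 j \<le> length cs"
    "\<And>j. j < q \<Longrightarrow> 1 \<le> T 1 j" "\<And>j. j < q \<Longrightarrow> T 1 j \<le> length cs"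
    "\<And>j. Suc j < p \<Longrightarrow> T 0 j \<le> T 0 (Suc j)" "\<And>j. Suc j < q \<Longrightarrow> T 1 j \<le> T 1 (Suc j)"
    "\<And>j. j < q \<Longrightarrow> T 0 j < T 1 j"
    "\<And>v. v < length cs \<Longrightarrow> card {(i, j). T i j = Suc v} = cs ! v"
  shows "T \<in> shape_tableaux cs p q"
  using assms unfolding shape_tableaux_def by auto

lemma shape_tableaux_entry_le:
  assumes "T \<in> shape_tableaux cs p q"
  shows "T i j \<le> length cs"
proof -
  note D = shape_tableauxD[OF assms]
  show ?thesis
    using D(2)[of j] D(3)[of j] D(4)[of i j] D(6)[of j] D(8)[of j] less_2_cases[of i]
    by (cases "j < p"; cases "j < q"; cases "2 \<le> i") auto
qed

lemma shape_tableaux_square: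
  "shape_tableaux cs L L = {T. (\<forall>i j. \<not> (i < 2 \<and> j < L) \<longrightarrow> T i j = 0)
       \<and> (\<forall>i<2. \<forall>j<L. 1 \<le> T i j \<and> T i j \<le> length cs)
       \<and> (\<forall>i<2. \<forall>j. Suc j < L \<longrightarrow> T i j \<le> T i (Suc j))
       \<and> (\<forall>j<L. T 0 j < T 1 j)
       \<and> (\<forall>v<length cs. card {(i, j). i < 2 \<and> j < L \<and> T i j = Suc v} = cs ! v)}"
  (is "_ = ?B")
proof (rule set_eqI)
  fix T :: "nat \<Rightarrow> nat \<Rightarrow> nat"
  have outside: "(\<forall>i j. \<not> (i < 2 \<and> j < L) \<longrightarrow> T i j = 0)
      \<longleftrightarrow> (\<forall>j\<ge>L. T 0 j = 0) \<and> (\<forall>j\<ge>L. T 1 j = 0) \<and> (\<forall>i\<ge>2. \<forall>j. T i j = 0)"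
  proof -
    have "\<not> (i < 2 \<and> j < L) \<longleftrightarrow> i = 0 \<and> L \<le> j \<or> i = 1 \<and> L \<le> j \<or> 2 \<le> i" for i j :: nat
      by auto
    then show ?thesis by auto
  qed
  have cells: "{(i, j). i < 2 \<and> j < L \<and> T i j = Suc v} = {(i, j). T i j = Suc v}"
    if "\<forall>i j. \<not> (i < 2 \<and> j < L) \<longrightarrow> T i j = 0" for v
    using that by (auto; metis Zero_not_Suc)
  have all_less_2: "(\<forall>i<2. P i) \<longleftrightarrow> P 0 \<and> P 1" for P :: "nat \<Rightarrow> bool"
    by (auto simp: less_2_cases_iff)
  show "T \<in> shape_tableaux cs L L \<longleftrightarrow> T \<in> ?B"
  proof (cases "\<forall>i j. \<not> (i < 2 \<and> j < L) \<longrightarrow> T i j = 0")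
    case True
    then show ?thesis
      using outside cells[OF True] by (simp add: shape_tableaux_def all_less_2)
  next
    case False
    then have "\<not> ((\<forall>j\<ge>L. T 0 j = 0) \<and> (\<forall>j\<ge>L. T 1 j = 0) \<and> (\<forall>i\<ge>2. \<forall>j. T i j = 0))"
      using outside by blast
    with False show ?thesis
      unfolding shape_tableaux_def by blast
  qed
qed

lemma Kostka2_eq_card_shape_tableaux:
  "Kostka2 cs = card (shape_tableaux cs ((sum_list cs + 2) div 2 - 1) ((sum_list cs + 2) div 2 - 1))"
  unfolding Kostka2_def two_row_tableaux_def Let_def shape_tableaux_square ..

lemma max_entries_final_segment:
  fixes r :: "nat \<Rightarrow> nat"
  assumes mono: "\<forall>j. Suc j < p \<longrightarrow> r j \<le> r (Suc j)" and bound: "\<forall>j<p. r j \<le> K"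
  shows "{j. j < p \<and> r j = K} = {p - card {j. j < p \<and> r j = K}..<p}"
proof (cases "{j. j < p \<and> r j = K} = {}")
  case True
  then show ?thesis by (simp only: True) simp
next
  case False
  let ?S = "{j. j < p \<and> r j = K}"
  define j0 where "j0 = Min ?S"
  have j0: "j0 \<in> ?S"
    unfolding j0_def by (rule Min_in) (use False in auto)
  have j0_le: "j0 \<le> j" if "j \<in> ?S" for j
    unfolding j0_def by (rule Min_le) (use that in auto)
  have "?S = {j0..<p}"
  proof
    show "{j0..<p} \<subseteq> ?S"
    proof
      fix j assume j: "j \<in> {j0..<p}"
      have "r j0 \<le> r j"
        by (rule lift_Suc_mono_le_ivl[of "{j. Suc j < p}"]) (use mono j in auto)
      then show "j \<in> ?S" using j j0 bound by (auto intro: antisym)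
    qed
  qed (use j0_le in auto)
  then show ?thesis using j0 by auto
qed

lemma card_entries_by_rows:
  fixes T :: "nat \<Rightarrow> nat \<Rightarrow> nat"
  assumes "K \<noteq> 0" "\<forall>j\<ge>p. T 0 j = 0" "\<forall>j\<ge>q. T 1 j = 0" "\<forall>i\<ge>2. \<forall>j. T i j = 0"
  shows "card {(i, j). T i j = K} = card {j. j < p \<and> T 0 j = K} + card {j. j < q \<and> T 1 j = K}"
proof -
  have "{(i, j). T i j = K} = Pair 0 ` {j. j < p \<and> T 0 j = K} \<union> Pair 1 ` {j. j < q \<and> T 1 j = K}"
  proof (rule set_eqI)
    fix x :: "nat \<times> nat"
    obtain i j where x: "x = (i, j)" by (cases x)
    have "T i j = K \<longleftrightarrow> i = 0 \<and> j < p \<and> T 0 j = K \<or> i = 1 \<and> j < q \<and> T 1 j = K"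
      using assms less_2_cases[of i] by (cases "2 \<le> i") (auto simp: not_less[symmetric])
    then show "x \<in> {(i, j). T i j = K}
        \<longleftrightarrow> x \<in> Pair 0 ` {j. j < p \<and> T 0 j = K} \<union> Pair 1 ` {j. j < q \<and> T 1 j = K}"
      unfolding x by auto
  qed
  then show ?thesis
    by (simp, subst card_Un_disjoint) (auto simp: card_image inj_on_def)
qed

definition fill_strip ::
  "nat \<Rightarrow> nat \<Rightarrow> nat \<Rightarrow> nat \<Rightarrow> nat \<Rightarrow> (nat \<Rightarrow> nat \<Rightarrow> nat) \<Rightarrow> nat \<Rightarrow> nat \<Rightarrow> nat" where
  "fill_strip K p' p q' q T i j =
    (if i = 0 \<and> p' \<le> j \<and> j < p \<or> i = 1 \<and> q' \<le> j \<and> j < q then K else T i j)"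

definition erase :: "nat \<Rightarrow> (nat \<Rightarrow> nat \<Rightarrow> nat) \<Rightarrow> nat \<Rightarrow> nat \<Rightarrow> nat" where
  "erase K T i j = (if T i j = K then 0 else T i j)"

lemma fill_strip_mem:
  assumes T: "T \<in> shape_tableaux cs p' q'"
    and "p' \<le> p" "q' \<le> q" "q \<le> p'" "(p - p') + (q - q') = c"
  shows "fill_strip (Suc (length cs)) p' p q' q T \<in> shape_tableaux (cs @ [c]) p q"
proof -
  let ?K = "Suc (length cs)"
  let ?F = "fill_strip ?K p' p q' q T"
  note D = shape_tableauxD[OF T]
  have fresh: "T i j \<noteq> ?K" for i j
    using shape_tableaux_entry_le[OF T, of i j] by simp
  have vanish: "\<forall>j\<ge>p. ?F 0 j = 0" "\<forall>j\<ge>q. ?F 1 j = 0" "\<forall>i\<ge>2. \<forall>j. ?F i j = 0"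
    using D(2-4) assms by (auto simp: fill_strip_def)
  have count: "card {(i, j). ?F i j = Suc v} = (cs @ [c]) ! v" if v: "v < length (cs @ [c])" for v
  proof (cases "v < length cs")
    case True
    have "{(i, j). ?F i j = Suc v} = {(i, j). T i j = Suc v}"
      using D(2,3) True by (auto simp: fill_strip_def)
    then show ?thesis using D(12)[OF True] True by (simp add: nth_append)
  next
    case False
    then have v: "v = length cs" using v by simp
    have "{j. j < p \<and> ?F 0 j = ?K} = {p'..<p}" "{j. j < q \<and> ?F 1 j = ?K} = {q'..<q}"
      using fresh assms by (auto simp: fill_strip_def not_le)
    then have "card {(i, j). ?F i j = ?K} = (p - p') + (q - q')"
      using card_entries_by_rows[OF _ vanish] by simp
    then show ?thesis using v assms by (simp add: nth_append)
  qed
  show ?thesis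
  proof (rule shape_tableauxI)
    fix j assume "Suc j < p"
    then show "?F 0 j \<le> ?F 0 (Suc j)"
      using D(6)[of j] D(9) by (cases "Suc j < p'") (auto simp: fill_strip_def)
  next
    fix j assume "Suc j < q"
    then show "?F 1 j \<le> ?F 1 (Suc j)"
      using D(8)[of j] D(10) by (cases "Suc j < q'") (auto simp: fill_strip_def)
  next
    fix j assume "j < q"
    then show "?F 0 j < ?F 1 j"
      using D(11) shape_tableaux_entry_le[OF T, of 0 j] assms
      by (cases "j < q'") (auto simp: fill_strip_def)
  qed (use D(5,7) vanish count assms in
      \<open>auto simp: fill_strip_def intro: le_SucI shape_tableaux_entry_le[OF T]\<close>)
qed

lemma erase_fill_strip:
  assumes "T \<in> shape_tableaux cs p' q'"
  shows "erase (Suc (length cs)) (fill_strip (Suc (length cs)) p' p q' q T) = T"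
proof (intro ext)
  fix i j
  have "T i j \<noteq> Suc (length cs)"
    using shape_tableaux_entry_le[OF assms, of i j] by simp
  then show "erase (Suc (length cs)) (fill_strip (Suc (length cs)) p' p q' q T) i j = T i j"
    using shape_tableauxD(2,3)[OF assms] by (auto simp: erase_def fill_strip_def)
qed

lemma card_top_fill_strip:
  assumes "T \<in> shape_tableaux cs p' q'" "p' \<le> p"
  shows "card {j. j < p \<and> fill_strip (Suc (length cs)) p' p q' q T 0 j = Suc (length cs)} = p - p'"
proof -
  have "T 0 j \<noteq> Suc (length cs)" for j
    using shape_tableaux_entry_le[OF assms(1), of 0 j] by simp
  then have "{j. j < p \<and> fill_strip (Suc (length cs)) p' p q' q T 0 j = Suc (length cs)} = {p'..<p}"
    using assms(2) by (auto simp: fill_strip_def not_le)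
  then show ?thesis by simp
qed

lemma shape_tableaux_snoc_strip:
  assumes T: "T \<in> shape_tableaux (cs @ [c]) p q"
  obtains a b where "card {j. j < p \<and> T 0 j = Suc (length cs)} = a" "a + b = c" "q + a \<le> p" "b \<le> q"
    "{j. T 0 j = Suc (length cs)} = {p - a..<p}" "{j. T 1 j = Suc (length cs)} = {q - b..<q}"
proof -
  let ?K = "Suc (length cs)"
  note D = shape_tableauxD[OF T]
  define a where "a = card {j. j < p \<and> T 0 j = ?K}"
  define b where "b = card {j. j < q \<and> T 1 j = ?K}"
  have "{j. j < p \<and> T 0 j = ?K} = {p - a..<p}"
    unfolding a_def by (rule max_entries_final_segment) (use D(6,9) in auto)
  then have row0: "T 0 j = ?K \<longleftrightarrow> p - a \<le> j \<and> j < p" for j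
    using D(2)[of j] by (cases "j < p") (auto simp: set_eq_iff)
  have "{j. j < q \<and> T 1 j = ?K} = {q - b..<q}"
    unfolding b_def by (rule max_entries_final_segment) (use D(8,10) in auto)
  then have row1: "T 1 j = ?K \<longleftrightarrow> q - b \<le> j \<and> j < q" for j
    using D(3)[of j] by (cases "j < q") (auto simp: set_eq_iff)
  have "a \<le> p"
    unfolding a_def by (rule order_trans[OF card_mono[of "{..<p}"]]) auto
  have "b \<le> q"
    unfolding b_def by (rule order_trans[OF card_mono[of "{..<q}"]]) auto
  have "a + b = card {(i, j). T i j = ?K}"
    unfolding a_def b_def by (rule card_entries_by_rows[symmetric]) (use D(2-4) in auto)
  also have "\<dots> = c"
    using D(12)[of "length cs"] by simp
  finally have "a + b = c" .
  have "q + a \<le> p"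
  proof (rule ccontr)
    assume "\<not> q + a \<le> p"
    then have "p - a < q" "p - a < p" using D(1) \<open>a \<le> p\<close> by auto
    then have "T 0 (p - a) = ?K" "T 0 (p - a) < T 1 (p - a)" "T 1 (p - a) \<le> ?K"
      using row0 D(8,11) by auto
    then show False by simp
  qed
  have "{j. T 0 j = ?K} = {p - a..<p}" "{j. T 1 j = ?K} = {q - b..<q}"
    by (intro set_eqI; simp only: mem_Collect_eq atLeastLessThan_iff row0 row1)+
  with \<open>a + b = c\<close> \<open>q + a \<le> p\<close> \<open>b \<le> q\<close> show thesis
    using that[OF a_def[symmetric]] by blast
qed

lemma erase_strip_mem:
  assumes T: "T \<in> shape_tableaux (cs @ [c]) p q" and "q + a \<le> p" "b \<le> q"
    and "{j. T 0 j = Suc (length cs)} = {p - a..<p}" "{j. T 1 j = Suc (length cs)} = {q - b..<q}"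
  shows "erase (Suc (length cs)) T \<in> shape_tableaux cs (p - a) (q - b)"
proof -
  let ?E = "erase (Suc (length cs)) T"
  note D = shape_tableauxD[OF T]
  have row0: "T 0 j = Suc (length cs) \<longleftrightarrow> p - a \<le> j \<and> j < p"
    and row1: "T 1 j = Suc (length cs) \<longleftrightarrow> q - b \<le> j \<and> j < q" for j
    using assms(4,5) by (simp_all add: set_eq_iff)
  show ?thesis
  proof (rule shape_tableauxI)
    fix j assume "j < p - a"
    then show "?E 0 j \<le> length cs" using row0[of j] D(6)[of j] by (auto simp: erase_def le_Suc_eq)
  next
    fix j assume "j < q - b"
    then show "?E 1 j \<le> length cs" using row1[of j] D(8)[of j] by (auto simp: erase_def le_Suc_eq)
  next
    fix j assume "Suc j < p - a"
    then show "?E 0 j \<le> ?E 0 (Suc j)" using row0[of j] row0[of "Suc j"] D(9) by (auto simp: erase_def)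
  next
    fix j assume "Suc j < q - b"
    then show "?E 1 j \<le> ?E 1 (Suc j)" using row1[of j] row1[of "Suc j"] D(10) by (auto simp: erase_def)
  next
    fix j assume "j < q - b"
    then show "?E 0 j < ?E 1 j" using row0[of j] row1[of j] D(11)[of j] assms(2) by (auto simp: erase_def)
  next
    fix v assume "v < length cs"
    moreover have "{(i, j). ?E i j = Suc v} = {(i, j). T i j = Suc v}"
      using \<open>v < length cs\<close> by (auto simp: erase_def)
    ultimately show "card {(i, j). ?E i j = Suc v} = cs ! v" using D(12)[of v] by (simp add: nth_append)
  qed (use assms D(2-5,7) row0 row1 in \<open>auto simp: erase_def\<close>)
qed

lemma fill_strip_erase:
  assumes "\<And>i j. 2 \<le> i \<Longrightarrow> T i j = 0"
    and "{j. T 0 j = K} = {p'..<p}" "{j. T 1 j = K} = {q'..<q}"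
  shows "fill_strip K p' p q' q (erase K T) = T"
proof (intro ext)
  fix i j
  have "T 0 j = K \<longleftrightarrow> p' \<le> j \<and> j < p" "T 1 j = K \<longleftrightarrow> q' \<le> j \<and> j < q"
    using assms(2,3) by (simp_all add: set_eq_iff)
  then show "fill_strip K p' p q' q (erase K T) i j = T i j"
    using assms(1)[of i j] less_2_cases[of i]
    by (cases "2 \<le> i") (auto simp: fill_strip_def erase_def)
qed

lemma bij_betw_fill_strip:
  "bij_betw (\<lambda>(a, T). fill_strip (Suc (length cs)) (p - a) p (q - (c - a)) q T)
     (SIGMA a:{a. a \<le> c \<and> c - a \<le> q \<and> q + a \<le> p}. shape_tableaux cs (p - a) (q - (c - a)))
     (shape_tableaux (cs @ [c]) p q)"
  (is "bij_betw ?f ?A ?B")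
proof -
  let ?K = "Suc (length cs)"
  let ?g = "\<lambda>T. (card {j. j < p \<and> T 0 j = ?K}, erase ?K T)"
  have left: "?g (?f x) = x \<and> ?f x \<in> ?B" if x: "x \<in> ?A" for x
  proof -
    obtain a T where x_eq: "x = (a, T)" and a: "a \<le> c" "c - a \<le> q" "q + a \<le> p"
      and T: "T \<in> shape_tableaux cs (p - a) (q - (c - a))"
      using x by blast
    have "?f x \<in> ?B"
      unfolding x_eq by (simp, rule fill_strip_mem[OF T]) (use a in auto)
    then show ?thesis
      using card_top_fill_strip[OF T] erase_fill_strip[OF T] a x_eq by simp
  qed
  have right: "?f (?g T) = T \<and> ?g T \<in> ?A" if T: "T \<in> ?B" for T
  proof -
    obtain a b where a: "card {j. j < p \<and> T 0 j = ?K} = a" "a + b = c" "q + a \<le> p" "b \<le> q"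
      and rows: "{j. T 0 j = ?K} = {p - a..<p}" "{j. T 1 j = ?K} = {q - b..<q}"
      by (rule shape_tableaux_snoc_strip[OF T])
    have b: "b = c - a" using a(2) by simp
    have g: "?g T = (a, erase ?K T)" using a(1) by simp
    have "?f (a, erase ?K T) = T"
      using fill_strip_erase[OF shape_tableauxD(4)[OF T] rows] unfolding b by simp
    moreover have "(a, erase ?K T) \<in> ?A"
      using erase_strip_mem[OF T a(3,4) rows] a(2-4) unfolding b by auto
    ultimately show ?thesis
      unfolding g by blast
  qed
  show ?thesis
  proof (rule bij_betw_byWitness[where f' = ?g])
    show "\<forall>x\<in>?A. ?g (?f x) = x"
      by (rule ballI) (rule conjunct1[OF left])
    show "?f ` ?A \<subseteq> ?B"
      by (rule image_subsetI) (rule conjunct2[OF left])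
    show "\<forall>T\<in>?B. ?f (?g T) = T"
      by (rule ballI) (rule conjunct1[OF right])
    show "?g ` ?B \<subseteq> ?A"
      by (rule image_subsetI) (rule conjunct2[OF right])
  qed
qed

lemma shape_tableaux_Nil: "shape_tableaux [] p q = (if p = 0 \<and> q = 0 then {\<lambda>i j. 0} else {})"
proof -
  have zero: "T = (\<lambda>i j. 0)" if T: "T \<in> shape_tableaux [] p q" for T
  proof (intro ext)
    fix i j
    show "T i j = 0" using shape_tableaux_entry_le[OF T, of i j] by simp
  qed
  have empty_shape: "p = 0 \<and> q = 0" if T: "T \<in> shape_tableaux [] p q" for T
  proof -
    have "\<not> 0 < p" using shape_tableauxD(5)[OF T, of 0] zero[OF T] by auto
    then show ?thesis using shape_tableauxD(1)[OF T] by simp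
  qed
  show ?thesis
  proof (cases "p = 0 \<and> q = 0")
    case True
    then have "(\<lambda>i j. 0) \<in> shape_tableaux [] p q"
      by (simp add: shape_tableaux_def)
    then have "shape_tableaux [] p q = {\<lambda>i j. 0}"
      using zero by blast
    with True show ?thesis by simp
  next
    case False
    then have "shape_tableaux [] p q = {}"
      using empty_shape by blast
    with False show ?thesis by simp
  qed
qed

lemma finite_shape_tableaux: "finite (shape_tableaux cs p q)"
proof (induction cs arbitrary: p q rule: rev_induct)
  case Nil
  then show ?case by (simp add: shape_tableaux_Nil)
next
  case (snoc c cs)
  have "finite (SIGMA a:{a. a \<le> c \<and> c - a \<le> q \<and> q + a \<le> p}. shape_tableaux cs (p - a) (q - (c - a)))"
    using snoc by (intro finite_SigmaI) auto
  then show ?case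
    using bij_betw_finite[OF bij_betw_fill_strip] by blast
qed

lemma card_shape_tableaux_snoc:
  "card (shape_tableaux (cs @ [c]) p q) =
    (\<Sum>a\<le>c. if c - a \<le> q \<and> q + a \<le> p then card (shape_tableaux cs (p - a) (q - (c - a))) else 0)"
proof -
  have "card (shape_tableaux (cs @ [c]) p q)
      = card (SIGMA a:{a. a \<le> c \<and> c - a \<le> q \<and> q + a \<le> p}. shape_tableaux cs (p - a) (q - (c - a)))"
    using bij_betw_same_card[OF bij_betw_fill_strip] by simp
  also have "\<dots> = (\<Sum>a\<in>{a \<in> {..c}. c - a \<le> q \<and> q + a \<le> p}. card (shape_tableaux cs (p - a) (q - (c - a))))"
    by (simp add: finite_shape_tableaux)
  also have "\<dots> = (\<Sum>a\<le>c. if c - a \<le> q \<and> q + a \<le> p then card (shape_tableaux cs (p - a) (q - (c - a))) else 0)"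
    by (rule sum.inter_filter) simp
  finally show ?thesis .
qed

section \<open>Tableaux with content \<open>2\<^sup>m\<close>\<close>

lemma card_shape_tableaux_replicate_Suc:
  "card (shape_tableaux (replicate (Suc m) 2) p q) =
      (if 2 \<le> q \<and> q \<le> p then card (shape_tableaux (replicate m 2) p (q - 2)) else 0)
    + (if 1 \<le> q \<and> q + 1 \<le> p then card (shape_tableaux (replicate m 2) (p - 1) (q - 1)) else 0)
    + (if q + 2 \<le> p then card (shape_tableaux (replicate m 2) (p - 2) q) else 0)"
proof -
  have sum_le_2: "(\<Sum>a\<le>2. g a) = g 0 + g 1 + g (2 :: nat)" for g :: "nat \<Rightarrow> nat"
    by (simp add: numeral_2_eq_2)
  show ?thesis
    unfolding replicate_Suc replicate_append_same[symmetric] card_shape_tableaux_snoc sum_le_2 by simp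
qed

lemma card_shape_tableaux_replicate_2_eq_0:
  assumes "\<not> (p + q = 2 * m \<and> q \<le> p)"
  shows "card (shape_tableaux (replicate m 2) p q) = 0"
  using assms
proof (induction m arbitrary: p q)
  case 0
  then show ?case by (auto simp: shape_tableaux_Nil)
next
  case (Suc m)
  have "(if 2 \<le> q \<and> q \<le> p then card (shape_tableaux (replicate m 2) p (q - 2)) else 0) = 0"
    "(if 1 \<le> q \<and> q + 1 \<le> p then card (shape_tableaux (replicate m 2) (p - 1) (q - 1)) else 0) = 0"
    "(if q + 2 \<le> p then card (shape_tableaux (replicate m 2) (p - 2) q) else 0) = 0"
    using Suc.prems by (auto intro!: Suc.IH)
  then show ?case
    unfolding card_shape_tableaux_replicate_Suc by simp
qed

text \<open>The three terms of the recursion place both new entries in the bottom row, one in each row,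
  or both in the top row. At the diagonal \<open>q = p\<close> the last two terms are absent, which is
  harmless because their trinomial values cancel by the symmetry \<open>t\<^sub>m(-1) = t\<^sub>m(1)\<close>.\<close>

lemma card_shape_tableaux_replicate_2_Suc:
  assumes count: "\<And>p' q'. int (card (shape_tableaux (replicate m 2) p' q')) =
      (if p' + q' = 2 * m \<and> q' \<le> p'
       then trinomial m (int p' - int m) - trinomial m (int p' - int m + 1) else 0)"
    and pq: "p + q = 2 * Suc m" "q \<le> p"
  shows "int (card (shape_tableaux (replicate (Suc m) 2) p q))
    = trinomial (Suc m) (int p - int (Suc m)) - trinomial (Suc m) (int p - int (Suc m) + 1)"
proof -
  define F where "F k = trinomial m k - trinomial m (k + 1)" for k
  have IH: "int (card (shape_tableaux (replicate m 2) p' q'))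
      = (if p' + q' = 2 * m \<and> q' \<le> p' then F (int p' - int m) else 0)" for p' q'
    using count unfolding F_def .
  define k where "k = int p - int m - 1"
  have top: "int (if 2 \<le> q \<and> q \<le> p then card (shape_tableaux (replicate m 2) p (q - 2)) else 0)
      = F (k + 1)"
  proof (cases "2 \<le> q")
    case True
    with pq have "p + (q - 2) = 2 * m \<and> q - 2 \<le> p" by simp
    with True show ?thesis using IH[of p "q - 2"] pq(2) by (simp add: k_def)
  next
    case False
    then have "int m < int p - int m" using pq by presburger
    then show ?thesis
      using False by (simp add: F_def k_def trinomial_eq_0)
  qed
  have rest: "int (if 1 \<le> q \<and> q + 1 \<le> p then card (shape_tableaux (replicate m 2) (p - 1) (q - 1)) else 0)
      + int (if q + 2 \<le> p then card (shape_tableaux (replicate m 2) (p - 2) q) else 0)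
      = F k + F (k - 1)"
  proof -
    have "q = 0 \<or> q = p \<or> 1 \<le> q \<and> q + 2 \<le> p"
      using pq by presburger
    then consider "q = 0" | "q = p" | "1 \<le> q" "q + 2 \<le> p"
      by blast
    then show ?thesis
    proof cases
      case 1
      then have "p = 2 * m + 2" "k = int m + 1" using pq by (simp_all add: k_def)
      then show ?thesis
        using \<open>q = 0\<close> by (simp add: IH F_def trinomial_eq_0)
    next
      case 2
      then have "k = 0" using pq by (simp add: k_def)
      then show ?thesis
        using \<open>q = p\<close> trinomial_uminus[of m 1] by (simp add: F_def)
    next
      case 3
      with pq have "p - 1 + (q - 1) = 2 * m \<and> q - 1 \<le> p - 1" "p - 2 + q = 2 * m \<and> q \<le> p - 2"
        by simp_all
      with 3 show ?thesis
        using IH[of "p - 1" "q - 1"] IH[of "p - 2" q] by (simp add: k_def of_nat_diff algebra_simps)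
    qed
  qed
  have "trinomial (Suc m) k - trinomial (Suc m) (k + 1) = F (k + 1) + F k + F (k - 1)"
    by (simp add: F_def)
  moreover have "int p - int (Suc m) = k" by (simp add: k_def)
  ultimately show ?thesis
    unfolding card_shape_tableaux_replicate_Suc using pq top rest by simp
qed

lemma card_shape_tableaux_replicate_2:
  "int (card (shape_tableaux (replicate m 2) p q)) =
    (if p + q = 2 * m \<and> q \<le> p
     then trinomial m (int p - int m) - trinomial m (int p - int m + 1) else 0)"
proof (induction m arbitrary: p q)
  case 0
  then show ?case by (simp add: shape_tableaux_Nil)
next
  case (Suc m)
  show ?case
  proof (cases "p + q = 2 * Suc m \<and> q \<le> p")
    case True
    then show ?thesis
      using card_shape_tableaux_replicate_2_Suc[OF Suc.IH] by simp
  next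
    case False
    then show ?thesis
      unfolding if_not_P[OF False] card_shape_tableaux_replicate_2_eq_0[OF False] by simp
  qed
qed

lemma Kostka2_replicate_2_4:
  assumes "1 \<le> m"
  shows "int (Kostka2 (replicate m 2 @ [4])) = trinomial m 2 - trinomial m 3"
proof -
  have "(sum_list (replicate m 2 @ [4]) + 2) div 2 - 1 = m + 2"
    by (simp add: sum_list_replicate)
  then have K: "Kostka2 (replicate m 2 @ [4])
      = (if 4 \<le> m + 2 then card (shape_tableaux (replicate m 2) (m + 2) (m + 2 - 4)) else 0)"
    unfolding Kostka2_eq_card_shape_tableaux card_shape_tableaux_snoc
    by (simp add: numeral_eq_Suc atMost_Suc)
  show ?thesis
  proof (cases "2 \<le> m")
    case True
    then have shape: "(m + 2) + (m + 2 - 4) = 2 * m \<and> m + 2 - 4 \<le> m + 2" by arith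
    have "int (card (shape_tableaux (replicate m 2) (m + 2) (m + 2 - 4)))
        = trinomial m 2 - trinomial m 3"
      unfolding card_shape_tableaux_replicate_2 if_P[OF shape] by simp
    with True show ?thesis by (simp add: K)
  next
    case False
    with assms have "m = 1" by simp
    with K show ?thesis by (simp add: trinomial_eq_0)
  qed
qed

lemma Kostka2_replicate_2_1_1:
  assumes "1 \<le> m"
  shows "int (Kostka2 (replicate m 2 @ [1, 1])) = trinomial m 0 - trinomial m 2"
proof -
  have L: "(sum_list (replicate m 2 @ [1, 1]) + 2) div 2 - 1 = m + 1"
    by (simp add: sum_list_replicate)
  have content: "replicate m 2 @ [1, 1] = (replicate m 2 @ [1]) @ [1]"
    by simp
  have "Kostka2 (replicate m 2 @ [1, 1])
      = card (shape_tableaux (replicate m 2) (m + 1) (m - 1)) + card (shape_tableaux (replicate m 2) m m)"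
    using assms unfolding Kostka2_eq_card_shape_tableaux L unfolding content card_shape_tableaux_snoc
    by (simp add: atMost_Suc)
  moreover have "(m + 1) + (m - 1) = 2 * m \<and> m - 1 \<le> m + 1"
    using assms by simp
  then have "int (card (shape_tableaux (replicate m 2) (m + 1) (m - 1))) = trinomial m 1 - trinomial m 2"
    unfolding card_shape_tableaux_replicate_2 by simp
  moreover have "int (card (shape_tableaux (replicate m 2) m m)) = trinomial m 0 - trinomial m 1"
    unfolding card_shape_tableaux_replicate_2 by simp
  ultimately show ?thesis by simp
qed

theorem lemma3p4:
  fixes m :: nat
  assumes "m \<ge> 1"
  shows "Kostka2 (replicate m 2 @ [4]) \<noteq> Kostka2 (replicate m 2 @ [1, 1])
    \<and> (m < 14 \<longrightarrow> Kostka2 (replicate m 2 @ [4]) < Kostka2 (replicate m 2 @ [1, 1]))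
    \<and> (m \<ge> 14 \<longrightarrow> Kostka2 (replicate m 2 @ [4]) > Kostka2 (replicate m 2 @ [1, 1]))"
proof -
  let ?d = "int (Kostka2 (replicate m 2 @ [4])) - int (Kostka2 (replicate m 2 @ [1, 1]))"
  have "?d = 2 * trinomial m 2 - trinomial m 3 - trinomial m 0"
    using Kostka2_replicate_2_4[OF assms] Kostka2_replicate_2_1_1[OF assms] by simp
  then have gap: "(int m + 2) * (int m + 3) * ?d = gap_form m (trinomial m 0, trinomial m 1)"
    by (simp only: trinomial_gap_identity)
  have pos: "0 < (int m + 2) * (int m + 3)" by simp
  show ?thesis
  proof (cases "m < 14")
    case True
    then have "?d < 0"
      using gap gap_form_neg_below_14[OF assms True] mult_less_cancel_left_pos[OF pos, of ?d 0]
      by simp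
    with True show ?thesis by simp
  next
    case False
    then have "0 < ?d"
      using gap gap_form_pos_from_14[of m] mult_less_cancel_left_pos[OF pos, of 0 ?d] by simp
    with False show ?thesis by simp
  qed
qed

end
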